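(* Under the standing assumption (A), the ODE $$\tfrac12\sigma^2 v''(x)+f(v'(x))-cv(x)=0,\quad x\ge0,\qquad v(0)=0,$$ has a bounded classical solution $v\in C^2([0,\infty))$ with the following properties: (i) $\lim_{x\to\infty}v(x)=f(0)/c$; (ii) $v'(0)>0$ and $\lim_{x\to\infty}v'(x)=0$; (iii) $v$ is increasing and concave on $[0,\infty)$.
   Context: Constants $\mu\in\mathbb R$, $\sigma>0$, $c>0$, $a>0$, $\lambda>0$ are fixed. Standing assumption (A): (i) $a>\max\{1,2\mu\}$; (ii) $\mu>\max\{c,\sigma^2/2\}$. The function $f:\mathbb R\to\mathbb R$ is $f(z)=\mu z+\lambda\ln\big[\lambda(e^{\frac{a}{\lambda}(1-z)}-1)/(1-z)\big]$ for $z\ne1$ and $f(1)=\mu+\lambda\ln a$ (it is $C^\infty$). *)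

theory Defs
  imports "HOL-Analysis.Analysis"
begin

definition fA :: "real \<Rightarrow> real \<Rightarrow> real \<Rightarrow> real \<Rightarrow> real" where
  "fA mu lam a z =
     (if z = 1 then mu + lam * ln a
      else mu * z + lam * ln (lam * (exp ((a / lam) * (1 - z)) - 1) / (1 - z)))"

end

theory Submission
  imports Defs
begin

text \<open>
  With k = 2/sigma^2 the equation is the planar system v' = p, p' = k (c v - f p), whose vector
  field is globally Lipschitz because f is (up to a linear term, the logarithm of a mean of
  exponentials). So every initial slope p0 = v'(0) yields a global solution depending
  continuously on p0. Shoot on p0: the slopes for which v' turns negative and those for which v''
  turns positive while v' > 0 form two disjoint open sets; small slopes lie in the first
  (v''(0) = - k f(0) < 0) while large ones do not, so by connectedness some p0 > 0 lies in
  neither. Along that solution v' > 0 and v'' \<le> 0, hence v is increasing, concave and bounded,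
  v' tends to 0, and the equation forces v to tend to f(0)/c.
\<close>

section \<open>The nonlinearity\<close>

definition exp_mean :: "real \<Rightarrow> real" where
  "exp_mean s = (if s = 0 then 1 else (exp s - 1) / s)"

lemma exp_mean_has_integral: "((\<lambda>u. exp (s * u)) has_integral exp_mean s) {0..1}"
proof (cases "s = 0")
  case True
  then show ?thesis using has_integral_const_real[of 1 0 1] by (simp add: exp_mean_def)
next
  case False
  have "((\<lambda>u. exp (s * u)) has_integral (exp (s * 1) / s - exp (s * 0) / s)) {0..1}"
  proof (rule fundamental_theorem_of_calculus)
    fix u :: real
    show "((\<lambda>u. exp (s * u) / s) has_vector_derivative exp (s * u)) (at u within {0..1})"
      using False by (auto intro!: derivative_eq_intros has_vector_derivative_at_within
          simp flip: has_real_derivative_iff_has_vector_derivative)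
  qed simp
  then show ?thesis using False by (simp add: exp_mean_def diff_divide_distrib)
qed

lemma exp_mean_pos: "exp_mean s > 0"
  unfolding exp_mean_def by (auto simp: divide_pos_pos divide_neg_neg linorder_neq_iff)

lemma exp_mean_mono: "t \<le> s \<Longrightarrow> exp_mean t \<le> exp_mean s"
  by (rule has_integral_le[OF exp_mean_has_integral exp_mean_has_integral]) (auto intro: mult_right_mono)

lemma exp_mean_le_exp_diff_mult:
  assumes "t \<le> s"
  shows "exp_mean s \<le> exp (s - t) * exp_mean t"
proof (rule has_integral_le[OF exp_mean_has_integral has_integral_mult_right[OF exp_mean_has_integral]])
  fix u :: real assume "u \<in> {0..1}"
  then have "s * u \<le> s - t + t * u"
    using mult_right_mono[of u 1 "s - t"] assms by (simp add: algebra_simps)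
  then show "exp (s * u) \<le> exp (s - t) * exp (t * u)" by (simp flip: exp_add)
qed

lemma ln_exp_mean_lipschitz: "\<bar>ln (exp_mean s) - ln (exp_mean t)\<bar> \<le> \<bar>s - t\<bar>"
proof -
  have *: "0 \<le> ln (exp_mean s) - ln (exp_mean t) \<and> ln (exp_mean s) - ln (exp_mean t) \<le> s - t"
    if "t \<le> s" for s t
  proof -
    have "ln (exp_mean s) \<le> ln (exp (s - t) * exp_mean t)"
      using exp_mean_le_exp_diff_mult[OF that] exp_mean_pos by simp
    also have "\<dots> = s - t + ln (exp_mean t)" using exp_mean_pos by (simp add: ln_mult_pos)
    finally show ?thesis using exp_mean_mono[OF that] exp_mean_pos by simp
  qed
  show ?thesis using *[of t s] *[of s t] by (cases "t \<le> s") auto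
qed

lemma fA_eq_exp_mean:
  assumes "lam > 0" "a > 0"
  shows "fA mu lam a z = mu * z + lam * ln a + lam * ln (exp_mean (a / lam * (1 - z)))"
proof (cases "z = 1")
  case False
  let ?s = "a / lam * (1 - z)"
  have "lam * (exp ?s - 1) / (1 - z) = a * exp_mean ?s"
    using False assms by (simp add: exp_mean_def field_simps)
  then show ?thesis
    using False assms exp_mean_pos by (simp add: fA_def ln_mult_pos algebra_simps)
qed (simp add: fA_def exp_mean_def)

lemma fA_lipschitz:
  assumes "lam > 0" "a > 0"
  shows "\<bar>fA mu lam a z - fA mu lam a w\<bar> \<le> (\<bar>mu\<bar> + a) * \<bar>z - w\<bar>"
proof -
  define D where "D = ln (exp_mean (a / lam * (1 - z))) - ln (exp_mean (a / lam * (1 - w)))"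
  have "\<bar>D\<bar> \<le> \<bar>a / lam * (1 - z) - a / lam * (1 - w)\<bar>"
    unfolding D_def by (rule ln_exp_mean_lipschitz)
  also have "a / lam * (1 - z) - a / lam * (1 - w) = a / lam * (w - z)"
    by (simp add: right_diff_distrib)
  also have "\<bar>a / lam * (w - z)\<bar> = a / lam * \<bar>z - w\<bar>"
    using assms by (simp add: abs_mult abs_minus_commute)
  finally have "lam * \<bar>D\<bar> \<le> a * \<bar>z - w\<bar>" using assms by (simp add: field_simps)
  moreover have "fA mu lam a z - fA mu lam a w = mu * (z - w) + lam * D"
    unfolding fA_eq_exp_mean[OF assms] D_def by (simp add: right_diff_distrib)
  ultimately show ?thesis
    using abs_triangle_ineq[of "mu * (z - w)" "lam * D"] assms
    by (simp add: abs_mult distrib_right)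
qed

lemma fA_zero_pos:
  assumes "lam > 0" "a > 1"
  shows "fA mu lam a 0 > 0"
proof -
  have "1 \<le> exp_mean (a / lam)"
    using exp_mean_mono[of 0 "a / lam"] assms by (simp add: exp_mean_def)
  then show ?thesis using assms fA_eq_exp_mean[of lam a mu 0] by (simp add: add_pos_nonneg)
qed

section \<open>Calculus on the half-line\<close>

lemma deriv_ge_imp_diff_ge:
  fixes g g' :: "real \<Rightarrow> real"
  assumes "0 \<le> a" "a \<le> b"
    and "\<And>x. x \<in> {a..b} \<Longrightarrow> (g has_real_derivative g' x) (at x within {0..})"
    and "\<And>x. x \<in> {a..b} \<Longrightarrow> m \<le> g' x"
  shows "m * (b - a) \<le> g b - g a"
proof -
  have "\<exists>x\<in>{a..b}. g b - g a = (*) (g' x) (b - a)"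
  proof (rule mvt_very_simple[OF assms(2)])
    fix x assume "a \<le> x" "x \<le> b"
    then have "(g has_real_derivative g' x) (at x within {a..b})"
      using assms(1) assms(3)[of x] by (auto intro: DERIV_subset)
    then show "(g has_derivative (*) (g' x)) (at x within {a..b})"
      by (rule has_field_derivative_imp_has_derivative)
  qed
  then obtain x where "x \<in> {a..b}" "g b - g a = g' x * (b - a)" by auto
  then show ?thesis using assms(2,4) by (simp add: mult_right_mono)
qed

lemma deriv_le_imp_diff_le:
  fixes g g' :: "real \<Rightarrow> real"
  assumes "0 \<le> a" "a \<le> b"
    and "\<And>x. x \<in> {a..b} \<Longrightarrow> (g has_real_derivative g' x) (at x within {0..})"
    and "\<And>x. x \<in> {a..b} \<Longrightarrow> g' x \<le> M"
  shows "g b - g a \<le> M * (b - a)"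
proof -
  have "- M * (b - a) \<le> - g b - - g a"
    using assms(3,4)
    by (intro deriv_ge_imp_diff_ge[OF assms(1,2), where g'="\<lambda>x. - g' x"]) (auto intro!: derivative_eq_intros)
  then show ?thesis by simp
qed

lemma deriv_neg_imp_decrease_right:
  fixes g :: "real \<Rightarrow> real"
  assumes "0 \<le> x" "(g has_real_derivative D) (at x within {0..})" "D < 0"
  obtains t where "x < t" "g t < g x"
proof -
  have "eventually (\<lambda>y. (g y - g x) / (y - x) < 0) (at x within {0..})"
    using assms(2,3) by (auto simp: has_field_derivative_iff intro: order_tendstoD)
  then obtain d where d: "d > 0"
    "\<And>y. y \<in> {0..} \<Longrightarrow> y \<noteq> x \<Longrightarrow> dist y x < d \<Longrightarrow> (g y - g x) / (y - x) < 0"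
    unfolding eventually_at by blast
  have "(g (x + d/2) - g x) / (x + d/2 - x) < 0"
    using d assms(1) by (intro d(2)) (auto simp: dist_real_def)
  then show ?thesis using d(1) by (intro that[of "x + d/2"]) (auto simp: divide_less_0_iff)
qed

lemma first_zero_after:
  fixes g :: "real \<Rightarrow> real"
  assumes "continuous_on {a..b} g" "a \<le> b" "g a > 0" "g b \<le> 0"
  obtains t1 where "t1 \<in> {a<..b}" "g t1 = 0" "\<forall>t\<in>{a..<t1}. g t > 0"
proof -
  define Z where "Z = {a..b} \<inter> g -` {..0}"
  have "closed Z" unfolding Z_def by (rule continuous_closed_preimage[OF assms(1)]) auto
  moreover have "b \<in> Z" "bdd_below Z" using assms by (auto simp: Z_def intro: bdd_belowI[of _ a])
  ultimately have t1Z: "Inf Z \<in> Z" using closed_contains_Inf by blast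
  then have t1a: "a < Inf Z" using assms(3) by (cases "Inf Z = a") (auto simp: Z_def)
  have pos: "g t > 0" if "t \<in> {a..<Inf Z}" for t
  proof (rule ccontr)
    assume "\<not> g t > 0"
    then have "Inf Z \<le> t" using that t1Z \<open>bdd_below Z\<close> by (intro cInf_lower) (auto simp: Z_def)
    then show False using that by simp
  qed
  have "g (Inf Z) \<ge> 0"
    using continuous_ge_on_closure[of "{a..<Inf Z}" g "Inf Z" 0] t1a t1Z pos
      continuous_on_subset[OF assms(1)]
    by (auto simp: Z_def less_imp_le)
  then show ?thesis using t1a t1Z pos by (intro that[of "Inf Z"]) (auto simp: Z_def)
qed

lemma concave_on_of_deriv_antimono:
  fixes g g' :: "real \<Rightarrow> real"
  assumes deriv: "\<And>t. t \<ge> 0 \<Longrightarrow> (g has_real_derivative g' t) (at t within {0..})"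
    and anti: "\<And>s t. 0 \<le> s \<Longrightarrow> s \<le> t \<Longrightarrow> g' t \<le> g' s"
  shows "concave_on {0..} g"
proof -
  have chord: "u * g x + v * g y \<le> g (u * x + v * y)"
    if "0 \<le> x" "x \<le> y" "u \<ge> 0" "v \<ge> 0" "u + v = 1" for x y u v
  proof -
    define z where "z = u * x + v * y"
    have "z = (u + v) * x + v * (y - x)" "z = (u + v) * y - u * (y - x)"
      by (simp_all add: z_def algebra_simps)
    then have z: "z = x + v * (y - x)" "z = y - u * (y - x)" using that(5) by simp_all
    have xz: "x \<le> z" using z(1) that by simp
    have zy: "z \<le> y" using z(2) that by simp
    have "g' z * (z - x) \<le> g z - g x"
      by (rule deriv_ge_imp_diff_ge[where g'=g']) (use that xz deriv anti in auto)
    moreover have "g y - g z \<le> g' z * (y - z)"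
      by (rule deriv_le_imp_diff_le[where g'=g']) (use that xz zy deriv anti in auto)
    ultimately have "u * g x + v * g y \<le> u * (g z - g' z * (z - x)) + v * (g z + g' z * (y - z))"
      using that by (intro add_mono mult_left_mono) auto
    also have "\<dots> = (u + v) * g z + g' z * (u * x + v * y - (u + v) * z)"
      by (simp add: algebra_simps)
    finally show ?thesis using that by (simp add: z_def)
  qed
  show ?thesis unfolding concave_on_iff
  proof (intro conjI ballI allI impI)
    fix x y u v :: real
    assume "x \<in> {0..}" "y \<in> {0..}" "0 \<le> u" "0 \<le> v" "u + v = 1"
    then show "u * g x + v * g y \<le> g (u *\<^sub>R x + v *\<^sub>R y)"
      using chord[of x y u v] chord[of y x v u] by (cases "x \<le> y") (auto simp: add.commute)
  qed simp
qed

section \<open>Global flow of a Lipschitz vector field\<close>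

lemma exp_has_integral_interval:
  fixes w m :: real
  assumes "w > 0" "m \<ge> 0"
  shows "((\<lambda>s. exp (w * s)) has_integral ((exp (w * m) - 1) / w)) {0..m}"
proof -
  have "((\<lambda>s. exp (w * s)) has_integral (exp (w * m) / w - exp (w * 0) / w)) {0..m}"
  proof (rule fundamental_theorem_of_calculus)
    fix s :: real
    show "((\<lambda>s. exp (w * s) / w) has_vector_derivative exp (w * s)) (at s within {0..m})"
      using assms by (auto intro!: derivative_eq_intros has_vector_derivative_at_within
          simp flip: has_real_derivative_iff_has_vector_derivative)
  qed (use assms in simp)
  then show ?thesis by (simp add: diff_divide_distrib)
qed

lemma norm_integral_le_affine_exp:
  fixes h :: "real \<Rightarrow> 'a::banach"
  assumes "continuous_on {0..m} h" "m \<ge> 0" "w > 0"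
    and "\<And>s. s \<in> {0..m} \<Longrightarrow> norm (h s) \<le> A + B * exp (w * s)"
  shows "norm (integral {0..m} h) \<le> A * m + B * ((exp (w * m) - 1) / w)"
proof -
  have bound: "((\<lambda>s. A + B * exp (w * s)) has_integral (A * m + B * ((exp (w * m) - 1) / w))) {0..m}"
    using has_integral_add[OF has_integral_const_real[of A 0 m]
        has_integral_mult_right[OF exp_has_integral_interval[OF assms(3,2)], of B]] assms(2)
    by (simp add: algebra_simps)
  have "norm (integral {0..m} h) \<le> integral {0..m} (\<lambda>s. A + B * exp (w * s))"
    using assms bound integrable_continuous_interval
    by (intro integral_norm_bound_integral) (auto simp: has_integral_integrable)
  then show ?thesis using integral_unique[OF bound] by simp
qed

lemma mult_exp_minus_le:
  fixes w m :: real
  assumes "w > 0" "m \<ge> 0"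
  shows "m * exp (- (w * m)) \<le> 1 / w"
proof -
  have "w * m \<le> exp (w * m)" using exp_ge_add_one_self[of "w * m"] by linarith
  then have "w * m * exp (- (w * m)) \<le> exp (w * m) * exp (- (w * m))"
    by (intro mult_right_mono) auto
  then show ?thesis using assms by (simp add: field_simps flip: exp_add)
qed

lemma exp_minus_mult_expm1_le:
  fixes w m :: real
  assumes "w > 0" "m \<ge> 0"
  shows "exp (- (w * m)) * ((exp (w * m) - 1) / w) \<le> 1 / w"
proof -
  have "exp (- (w * m)) * ((exp (w * m) - 1) / w) = (1 - exp (- (w * m))) / w"
    by (simp add: field_simps flip: exp_add)
  also have "\<dots> \<le> 1 / w" using assms by (intro divide_right_mono) auto
  finally show ?thesis .
qed

locale lipschitz_field =
  fixes F :: "'a::banach \<Rightarrow> 'a" and L :: real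
  assumes L_pos: "L > 0" and lipschitz: "\<And>x y. norm (F x - F y) \<le> L * norm (x - y)"
begin

lemma continuous_on_field: "continuous_on S F"
proof -
  have "lipschitz_on L UNIV F" unfolding lipschitz_on_def using lipschitz L_pos by (auto simp: dist_norm)
  then show ?thesis using lipschitz_on_continuous_on continuous_on_subset by blast
qed

text \<open>
  The solution is sought as y(t) = exp(2 L t) \<psi>(t) with \<psi> bounded: in these coordinates the
  Picard operator is a 1/2-contraction for the sup norm on the whole half-line at once.
\<close>

definition weighted_field :: "(real \<Rightarrow>\<^sub>C 'a) \<Rightarrow> real \<Rightarrow> 'a" where
  "weighted_field \<psi> s = F (exp (2 * L * s) *\<^sub>R \<psi> s)"

lemma continuous_on_weighted_field: "continuous_on S (weighted_field \<psi>)"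
  unfolding weighted_field_def
  by (intro continuous_on_compose2[OF continuous_on_field[of UNIV]] continuous_intros
      continuous_on_apply_bcontfun) auto

lemma weighted_field_integrable: "weighted_field \<psi> integrable_on {a..b}"
  by (rule integrable_continuous_interval[OF continuous_on_weighted_field])

lemma norm_weighted_field_le:
  fixes \<psi> :: "real \<Rightarrow>\<^sub>C 'a"
  assumes "\<And>s. norm (\<psi> s) \<le> B"
  shows "norm (weighted_field \<psi> s) \<le> norm (F 0) + L * B * exp (2 * L * s)"
proof -
  have "norm (weighted_field \<psi> s) \<le> norm (F 0) + L * norm (exp (2 * L * s) *\<^sub>R \<psi> s)"
    using lipschitz[of _ 0] norm_triangle_ineq2[of _ "F 0"] unfolding weighted_field_def
    by (smt (verit) diff_zero)
  also have "norm (exp (2 * L * s) *\<^sub>R \<psi> s) \<le> exp (2 * L * s) * B"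
    using assms[of s] by (simp add: mult_left_mono)
  finally show ?thesis using L_pos by (simp add: algebra_simps mult_left_mono)
qed

lemma norm_weighted_field_diff_le:
  "norm (weighted_field \<psi>1 s - weighted_field \<psi>2 s) \<le> L * dist \<psi>1 \<psi>2 * exp (2 * L * s)"
proof -
  have "norm (weighted_field \<psi>1 s - weighted_field \<psi>2 s)
      \<le> L * norm (exp (2 * L * s) *\<^sub>R \<psi>1 s - exp (2 * L * s) *\<^sub>R \<psi>2 s)"
    unfolding weighted_field_def by (rule lipschitz)
  also have "\<dots> = L * (exp (2 * L * s) * dist (\<psi>1 s) (\<psi>2 s))"
    by (simp add: dist_norm flip: scaleR_diff_right)
  also have "\<dots> \<le> L * (exp (2 * L * s) * dist \<psi>1 \<psi>2)"
    using L_pos dist_bounded by (intro mult_left_mono) auto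
  finally show ?thesis by (simp add: algebra_simps)
qed

definition picard :: "'a \<Rightarrow> (real \<Rightarrow>\<^sub>C 'a) \<Rightarrow> real \<Rightarrow> 'a" where
  "picard y0 \<psi> t =
     exp (- (2 * L * max 0 t)) *\<^sub>R (y0 + integral {0..max 0 t} (weighted_field \<psi>))"

lemma continuous_on_integral_weighted_field:
  "continuous_on UNIV (\<lambda>t. integral {0..max 0 t} (weighted_field \<psi>))"
proof (rule continuous_at_imp_continuous_on, intro ballI)
  fix t :: real
  let ?b = "\<bar>t\<bar> + 1"
  have "continuous_on {0..?b} (\<lambda>u. integral {0..u} (weighted_field \<psi>))"
    by (rule indefinite_integral_continuous_1[OF weighted_field_integrable])
  then have "continuous_on {-?b<..<?b} (\<lambda>t. integral {0..max 0 t} (weighted_field \<psi>))"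
    by (rule continuous_on_compose2) (auto intro!: continuous_intros)
  then show "isCont (\<lambda>t. integral {0..max 0 t} (weighted_field \<psi>)) t"
    using continuous_on_eq_continuous_at[of "{-?b<..<?b}"] by fastforce
qed

lemma picard_in_bcontfun: "picard y0 \<psi> \<in> bcontfun"
proof -
  obtain B where B: "\<And>s. norm (\<psi> s) \<le> B"
    using bounded_apply_bcontfun[of \<psi>] unfolding bounded_iff by auto
  then have "B \<ge> 0" using norm_ge_zero order_trans by blast
  have "norm (picard y0 \<psi> t) \<le> norm y0 + norm (F 0) / (2 * L) + L * B / (2 * L)" for t
  proof -
    let ?m = "max 0 t"
    have "norm (integral {0..?m} (weighted_field \<psi>))
        \<le> norm (F 0) * ?m + (L * B) * ((exp (2 * L * ?m) - 1) / (2 * L))"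
      using continuous_on_weighted_field L_pos norm_weighted_field_le[OF B]
      by (intro norm_integral_le_affine_exp) auto
    then have "norm (picard y0 \<psi> t) \<le> exp (- (2 * L * ?m))
        * (norm y0 + (norm (F 0) * ?m + (L * B) * ((exp (2 * L * ?m) - 1) / (2 * L))))"
      unfolding picard_def using norm_triangle_ineq[of y0 "integral {0..?m} (weighted_field \<psi>)"]
      by (simp add: mult_left_mono)
    also have "\<dots> = exp (- (2 * L * ?m)) * norm y0 + norm (F 0) * (?m * exp (- (2 * L * ?m)))
        + (L * B) * (exp (- (2 * L * ?m)) * ((exp (2 * L * ?m) - 1) / (2 * L)))"
      by (simp add: algebra_simps)
    also have "\<dots> \<le> norm y0 + norm (F 0) * (1 / (2 * L)) + (L * B) * (1 / (2 * L))"
      using L_pos \<open>B \<ge> 0\<close>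
      by (intro add_mono mult_left_mono mult_exp_minus_le exp_minus_mult_expm1_le)
        (auto intro!: mult_left_le_one_le)
    finally show ?thesis by simp
  qed
  then have "bounded (range (picard y0 \<psi>))" unfolding bounded_iff by blast
  moreover have "continuous_on UNIV (picard y0 \<psi>)"
    unfolding picard_def by (intro continuous_intros continuous_on_integral_weighted_field)
  ultimately show ?thesis unfolding bcontfun_def by simp
qed

definition picard_op :: "'a \<Rightarrow> (real \<Rightarrow>\<^sub>C 'a) \<Rightarrow> (real \<Rightarrow>\<^sub>C 'a)" where
  "picard_op y0 \<psi> = Bcontfun (picard y0 \<psi>)"

lemma apply_picard_op: "picard_op y0 \<psi> t = picard y0 \<psi> t"
  unfolding picard_op_def using Bcontfun_inverse[OF picard_in_bcontfun] by simp

lemma picard_op_contraction: "dist (picard_op y0 \<psi>1) (picard_op y0 \<psi>2) \<le> 1/2 * dist \<psi>1 \<psi>2"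
proof (rule dist_bound)
  fix t :: real
  let ?m = "max 0 t" and ?D = "dist \<psi>1 \<psi>2"
  have "integral {0..?m} (weighted_field \<psi>1) - integral {0..?m} (weighted_field \<psi>2)
      = integral {0..?m} (\<lambda>s. weighted_field \<psi>1 s - weighted_field \<psi>2 s)"
    by (simp add: integral_diff weighted_field_integrable)
  moreover have "norm (integral {0..?m} (\<lambda>s. weighted_field \<psi>1 s - weighted_field \<psi>2 s))
      \<le> 0 * ?m + (L * ?D) * ((exp (2 * L * ?m) - 1) / (2 * L))"
    using L_pos norm_weighted_field_diff_le
    by (intro norm_integral_le_affine_exp) (auto intro!: continuous_intros continuous_on_weighted_field)
  ultimately have "dist (picard y0 \<psi>1 t) (picard y0 \<psi>2 t)
      \<le> exp (- (2 * L * ?m)) * ((L * ?D) * ((exp (2 * L * ?m) - 1) / (2 * L)))"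
    unfolding picard_def dist_norm by (simp add: mult_left_mono flip: scaleR_diff_right)
  also have "\<dots> = (L * ?D) * (exp (- (2 * L * ?m)) * ((exp (2 * L * ?m) - 1) / (2 * L)))"
    by simp
  also have "\<dots> \<le> (L * ?D) * (1 / (2 * L))"
    using L_pos by (intro mult_left_mono exp_minus_mult_expm1_le) auto
  finally show "dist (picard_op y0 \<psi>1 t) (picard_op y0 \<psi>2 t) \<le> 1/2 * ?D"
    using L_pos by (simp add: apply_picard_op)
qed

lemma picard_op_dist_initial: "dist (picard_op y0 \<psi>) (picard_op y1 \<psi>) \<le> dist y0 y1"
proof (rule dist_bound)
  fix t :: real
  have "dist (picard y0 \<psi> t) (picard y1 \<psi> t) = exp (- (2 * L * max 0 t)) * dist y0 y1"
    unfolding picard_def dist_norm by (simp flip: scaleR_diff_right)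
  also have "\<dots> \<le> dist y0 y1" using L_pos by (intro mult_left_le_one_le) auto
  finally show "dist (picard_op y0 \<psi> t) (picard_op y1 \<psi> t) \<le> dist y0 y1"
    by (simp add: apply_picard_op)
qed

definition picard_fixpoint :: "'a \<Rightarrow> (real \<Rightarrow>\<^sub>C 'a)" where
  "picard_fixpoint y0 = (THE \<psi>. picard_op y0 \<psi> = \<psi>)"

lemma picard_op_fixpoint: "picard_op y0 (picard_fixpoint y0) = picard_fixpoint y0"
proof -
  have "\<exists>!\<psi>. picard_op y0 \<psi> = \<psi>"
    by (rule banach_fix_type[of "1/2"]) (use picard_op_contraction in auto)
  then show ?thesis unfolding picard_fixpoint_def by (rule theI')
qed

lemma dist_picard_fixpoint_le: "dist (picard_fixpoint y0) (picard_fixpoint y1) \<le> 2 * dist y0 y1"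
proof -
  have "dist (picard_fixpoint y0) (picard_fixpoint y1)
      \<le> dist (picard_op y0 (picard_fixpoint y0)) (picard_op y0 (picard_fixpoint y1))
        + dist (picard_op y0 (picard_fixpoint y1)) (picard_op y1 (picard_fixpoint y1))"
    using dist_triangle by (metis picard_op_fixpoint)
  also have "\<dots> \<le> 1/2 * dist (picard_fixpoint y0) (picard_fixpoint y1) + dist y0 y1"
    by (intro add_mono picard_op_contraction picard_op_dist_initial)
  finally show ?thesis by simp
qed

definition flow :: "'a \<Rightarrow> real \<Rightarrow> 'a" where
  "flow y0 t = exp (2 * L * t) *\<^sub>R picard_fixpoint y0 t"

lemma flow_eq_integral:
  assumes "t \<ge> 0"
  shows "flow y0 t = y0 + integral {0..t} (\<lambda>s. F (flow y0 s))"
proof -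
  have "flow y0 t = exp (2 * L * t) *\<^sub>R picard y0 (picard_fixpoint y0) t"
    unfolding flow_def by (metis apply_picard_op picard_op_fixpoint)
  also have "\<dots> = y0 + integral {0..t} (weighted_field (picard_fixpoint y0))"
    unfolding picard_def using assms by (simp add: exp_minus)
  also have "weighted_field (picard_fixpoint y0) = (\<lambda>s. F (flow y0 s))"
    by (simp add: fun_eq_iff weighted_field_def flow_def)
  finally show ?thesis .
qed

lemma flow_zero: "flow y0 0 = y0"
  using flow_eq_integral[of 0] by simp

lemma continuous_on_flow: "continuous_on A (flow y0)"
  unfolding flow_def by (intro continuous_intros) auto

lemma flow_has_vector_derivative:
  assumes "t \<ge> 0"
  shows "(flow y0 has_vector_derivative F (flow y0 t)) (at t within {0..})"
proof -
  have "continuous_on {0..t+1} (\<lambda>s. F (flow y0 s))"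
    by (rule continuous_on_compose2[OF continuous_on_field continuous_on_flow]) auto
  then have "((\<lambda>u. integral {0..u} (\<lambda>s. F (flow y0 s))) has_vector_derivative F (flow y0 t))
      (at t within {0..t+1})"
    by (rule integral_has_vector_derivative) (use assms in auto)
  moreover have "at t within {0..t+1} = at t within {0..}"
    by (rule at_within_nhd[where S="{..<t+1}"]) auto
  ultimately have "((\<lambda>u. y0 + integral {0..u} (\<lambda>s. F (flow y0 s))) has_vector_derivative
      F (flow y0 t)) (at t within {0..})"
    by (auto intro!: derivative_eq_intros)
  then show ?thesis
    by (rule has_vector_derivative_transform[rotated 2]) (use assms flow_eq_integral in auto)
qed

lemma norm_flow_diff_le:
  assumes "t \<ge> 0"
  shows "norm (flow y0 t - flow y1 t) \<le> 2 * exp (2 * L * t) * norm (y0 - y1)"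
proof -
  have "norm (flow y0 t - flow y1 t)
      = exp (2 * L * t) * dist (picard_fixpoint y0 t) (picard_fixpoint y1 t)"
    unfolding flow_def dist_norm by (simp flip: scaleR_diff_right)
  also have "\<dots> \<le> exp (2 * L * t) * (2 * dist y0 y1)"
    by (intro mult_left_mono order.trans[OF dist_bounded dist_picard_fixpoint_le]) auto
  finally show ?thesis by (simp add: dist_norm)
qed

end

section \<open>The second order equation as a planar system\<close>

lemma abs_fst_le_norm: "\<bar>fst z\<bar> \<le> norm (z :: real \<times> real)"
  using norm_fst_le[of "fst z" "snd z"] by simp

lemma abs_snd_le_norm: "\<bar>snd z\<bar> \<le> norm (z :: real \<times> real)"
  using norm_snd_le[of "snd z" "fst z"] by simp

locale value_ode =
  fixes mu sigma c a lam :: real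
  assumes sigma_pos: "sigma > 0" and c_pos: "c > 0" and a_gt_1: "a > 1" and lam_pos: "lam > 0"
begin

definition f :: "real \<Rightarrow> real" where "f = fA mu lam a"
definition K :: real where "K = \<bar>mu\<bar> + a"
definition k :: real where "k = 2 / sigma^2"

definition field :: "real \<times> real \<Rightarrow> real \<times> real" where
  "field y = (snd y, k * (c * fst y - f (snd y)))"

definition Lc :: real where "Lc = 1 + k * (c + K)"

lemma K_pos: "K > 0" using a_gt_1 by (simp add: K_def add_nonneg_pos)
lemma k_pos: "k > 0" using sigma_pos by (simp add: k_def)
lemma Lc_pos: "Lc > 0" using k_pos c_pos K_pos by (simp add: Lc_def add_pos_nonneg)

lemma f_lipschitz: "\<bar>f z - f w\<bar> \<le> K * \<bar>z - w\<bar>"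
  unfolding f_def K_def using fA_lipschitz[OF lam_pos] a_gt_1 by simp

lemma continuous_on_f: "continuous_on A f"
proof -
  have "lipschitz_on K UNIV f"
    unfolding lipschitz_on_def using f_lipschitz K_pos by (auto simp: dist_real_def)
  then show ?thesis using lipschitz_on_continuous_on continuous_on_subset by blast
qed

lemma f_zero_pos: "f 0 > 0" unfolding f_def using fA_zero_pos[OF lam_pos a_gt_1] .

lemma f_le_affine: "p \<ge> 0 \<Longrightarrow> f p \<le> f 0 + K * p"
  using f_lipschitz[of p 0] by simp

lemma abs_c_mult_diff_le: "\<bar>y\<bar> \<le> B \<Longrightarrow> \<bar>c * x - y\<bar> \<le> c * \<bar>x\<bar> + B"
  using abs_triangle_ineq4[of "c * x" y] c_pos by (simp add: abs_mult)

lemma abs_field_snd_diff_le: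
  "\<bar>k * (c * v - f p) - k * (c * v' - f p')\<bar> \<le> k * (c * \<bar>v - v'\<bar> + K * \<bar>p - p'\<bar>)"
proof -
  have "k * (c * v - f p) - k * (c * v' - f p') = k * (c * (v - v') - (f p - f p'))"
    by (simp add: algebra_simps)
  then have "\<bar>k * (c * v - f p) - k * (c * v' - f p')\<bar> = k * \<bar>c * (v - v') - (f p - f p')\<bar>"
    using k_pos by (simp add: abs_mult)
  also have "\<dots> \<le> k * (c * \<bar>v - v'\<bar> + K * \<bar>p - p'\<bar>)"
    using f_lipschitz[of p p'] k_pos by (intro mult_left_mono abs_c_mult_diff_le) auto
  finally show ?thesis .
qed

lemma field_lipschitz: "norm (field y - field z) \<le> Lc * norm (y - z)"
proof -
  obtain v p v' p' where yz: "y = (v, p)" "z = (v', p')" by fastforce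
  have "\<bar>v - v'\<bar> \<le> norm (y - z)" "\<bar>p - p'\<bar> \<le> norm (y - z)"
    using abs_fst_le_norm[of "y - z"] abs_snd_le_norm[of "y - z"] by (simp_all add: yz)
  then have "\<bar>p - p'\<bar> + k * (c * \<bar>v - v'\<bar> + K * \<bar>p - p'\<bar>)
      \<le> norm (y - z) + k * (c * norm (y - z) + K * norm (y - z))"
    using k_pos c_pos K_pos by (intro add_mono mult_left_mono) auto
  moreover have "norm (field y - field z) \<le> \<bar>p - p'\<bar> + \<bar>k * (c * v - f p) - k * (c * v' - f p')\<bar>"
    using norm_Pair_le[of "p - p'" "k * (c * v - f p) - k * (c * v' - f p')"] by (simp add: yz field_def)
  ultimately show ?thesis
    using abs_field_snd_diff_le[of v p v' p'] by (simp add: Lc_def algebra_simps)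
qed

sublocale lipschitz_field field Lc
  by unfold_locales (rule Lc_pos, rule field_lipschitz)

text \<open>V p0, P p0 and Q p0 are v, v' and v'' of the solution with v(0) = 0 and v'(0) = p0.\<close>

definition V :: "real \<Rightarrow> real \<Rightarrow> real" where "V p0 t = fst (flow (0, p0) t)"
definition P :: "real \<Rightarrow> real \<Rightarrow> real" where "P p0 t = snd (flow (0, p0) t)"
definition Q :: "real \<Rightarrow> real \<Rightarrow> real" where "Q p0 t = k * (c * V p0 t - f (P p0 t))"

lemma V_has_real_derivative:
  assumes "t \<ge> 0" shows "(V p0 has_real_derivative P p0 t) (at t within {0..})"
  unfolding has_field_derivative_def V_def[abs_def]
  by (rule has_derivative_eq_rhs[OF has_derivative_fst])
    (use flow_has_vector_derivative[OF assms] in \<open>auto simp: has_vector_derivative_def fun_eq_iff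
      field_def P_def\<close>)

lemma P_has_real_derivative:
  assumes "t \<ge> 0" shows "(P p0 has_real_derivative Q p0 t) (at t within {0..})"
  unfolding has_field_derivative_def P_def[abs_def]
  by (rule has_derivative_eq_rhs[OF has_derivative_snd])
    (use flow_has_vector_derivative[OF assms] in \<open>auto simp: has_vector_derivative_def fun_eq_iff
      field_def P_def V_def Q_def\<close>)

lemma V_zero: "V p0 0 = 0" by (simp add: V_def flow_zero)
lemma P_zero: "P p0 0 = p0" by (simp add: P_def flow_zero)

lemma continuous_on_V: "continuous_on A (V p0)"
  unfolding V_def[abs_def] by (intro continuous_intros continuous_on_flow)

lemma continuous_on_P: "continuous_on A (P p0)"
  unfolding P_def[abs_def] by (intro continuous_intros continuous_on_flow)

lemma continuous_on_Q: "continuous_on A (Q p0)"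
  unfolding Q_def[abs_def]
  by (intro continuous_intros continuous_on_V continuous_on_compose2[OF continuous_on_f continuous_on_P])
    auto

lemma ode_equation: "sigma^2 / 2 * Q p0 t + fA mu lam a (P p0 t) - c * V p0 t = 0"
  using sigma_pos by (simp add: Q_def k_def f_def field_simps)

definition sensitivity :: "real \<Rightarrow> real" where "sensitivity t = 2 * exp (2 * Lc * t)"

lemma sensitivity_pos: "sensitivity t > 0" unfolding sensitivity_def by simp

lemma sensitivity_mono: "s \<le> t \<Longrightarrow> sensitivity s \<le> sensitivity t"
  unfolding sensitivity_def using Lc_pos by simp

lemma abs_V_diff_le: "t \<ge> 0 \<Longrightarrow> \<bar>V p0 t - V p1 t\<bar> \<le> sensitivity t * \<bar>p0 - p1\<bar>"
  using norm_flow_diff_le[of t "(0, p0)" "(0, p1)"] abs_fst_le_norm[of "flow (0, p0) t - flow (0, p1) t"]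
  by (simp add: V_def sensitivity_def)

lemma abs_P_diff_le: "t \<ge> 0 \<Longrightarrow> \<bar>P p0 t - P p1 t\<bar> \<le> sensitivity t * \<bar>p0 - p1\<bar>"
  using norm_flow_diff_le[of t "(0, p0)" "(0, p1)"] abs_snd_le_norm[of "flow (0, p0) t - flow (0, p1) t"]
  by (simp add: P_def sensitivity_def)

lemma abs_Q_diff_le:
  assumes "t \<ge> 0"
  shows "\<bar>Q p0 t - Q p1 t\<bar> \<le> k * (c + K) * sensitivity t * \<bar>p0 - p1\<bar>"
proof -
  have "\<bar>Q p0 t - Q p1 t\<bar> \<le> k * (c * \<bar>V p0 t - V p1 t\<bar> + K * \<bar>P p0 t - P p1 t\<bar>)"
    unfolding Q_def by (rule abs_field_snd_diff_le)
  also have "\<dots> \<le> k * (c * (sensitivity t * \<bar>p0 - p1\<bar>) + K * (sensitivity t * \<bar>p0 - p1\<bar>))"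
    using abs_V_diff_le[OF assms] abs_P_diff_le[OF assms] c_pos K_pos k_pos
    by (intro mult_left_mono add_mono) auto
  finally show ?thesis by (simp add: algebra_simps)
qed

lemma V_nonneg:
  assumes "t \<ge> 0" "\<forall>s\<in>{0..t}. P p0 s \<ge> 0"
  shows "V p0 t \<ge> 0"
  using deriv_ge_imp_diff_ge[of 0 t "V p0" "P p0" 0] assms V_has_real_derivative by (simp add: V_zero)

section \<open>Shooting on the initial slope\<close>

definition undershoot :: "real set" where
  "undershoot = {p0. 0 < p0 \<and> (\<exists>t\<ge>0. P p0 t < 0)}"

definition overshoot :: "real set" where
  "overshoot = {p0. 0 < p0 \<and> (\<exists>x\<ge>0. (\<forall>t\<in>{0..x}. P p0 t > 0) \<and> Q p0 x > 0)}"

lemma open_undershoot: "open undershoot"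
  unfolding open_dist
proof (intro ballI)
  fix p0 assume "p0 \<in> undershoot"
  then obtain t where p0: "p0 > 0" and t: "t \<ge> 0" "P p0 t < 0" by (auto simp: undershoot_def)
  define e where "e = min p0 (- P p0 t / sensitivity t)"
  have e: "e > 0" using p0 t sensitivity_pos[of t] by (simp add: e_def divide_pos_pos divide_neg_pos)
  have "e \<le> - P p0 t / sensitivity t" by (simp add: e_def)
  then have e_le: "sensitivity t * e \<le> - P p0 t"
    using mult_left_mono[of e "- P p0 t / sensitivity t" "sensitivity t"] sensitivity_pos[of t]
    by simp
  have "y \<in> undershoot" if "dist y p0 < e" for y
  proof -
    have y: "\<bar>y - p0\<bar> < e" using that by (simp add: dist_real_def)
    then have "y > 0" unfolding e_def by (simp add: abs_less_iff)
    have "sensitivity t * \<bar>y - p0\<bar> < sensitivity t * e" using y sensitivity_pos[of t] by simp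
    also note e_le
    finally have "P y t < 0" using abs_P_diff_le[OF t(1), of y p0] by linarith
    then show ?thesis using \<open>y > 0\<close> t by (auto simp: undershoot_def)
  qed
  then show "\<exists>e>0. \<forall>y. dist y p0 < e \<longrightarrow> y \<in> undershoot" using e by blast
qed

lemma open_overshoot: "open overshoot"
  unfolding open_dist
proof (intro ballI)
  fix p0 assume "p0 \<in> overshoot"
  then obtain x where p0: "p0 > 0" and x: "x \<ge> 0" "\<forall>t\<in>{0..x}. P p0 t > 0" "Q p0 x > 0"
    by (auto simp: overshoot_def)
  obtain tm where tm: "tm \<in> {0..x}" "\<forall>s\<in>{0..x}. P p0 tm \<le> P p0 s"
    using continuous_attains_inf[of "{0..x}" "P p0"] x(1) continuous_on_P by auto
  define m where "m = P p0 tm"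
  have m: "m > 0" using tm x by (simp add: m_def)
  define D where "D = k * (c + K) * sensitivity x"
  have D: "D > 0" using k_pos c_pos K_pos sensitivity_pos[of x] by (simp add: D_def)
  define e where "e = min p0 (min (m / sensitivity x) (Q p0 x / D))"
  have e: "e > 0" using p0 m x sensitivity_pos[of x] D by (simp add: e_def)
  have "e \<le> m / sensitivity x" "e \<le> Q p0 x / D" by (simp_all add: e_def)
  then have e_le: "sensitivity x * e \<le> m" "D * e \<le> Q p0 x"
    using sensitivity_pos[of x] D by (simp_all add: pos_le_divide_eq mult.commute)
  have "y \<in> overshoot" if "dist y p0 < e" for y
  proof -
    have y: "\<bar>y - p0\<bar> < e" using that by (simp add: dist_real_def)
    then have "y > 0" unfolding e_def by (simp add: abs_less_iff)
    have "P y t > 0" if t: "t \<in> {0..x}" for t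
    proof -
      have "sensitivity t * \<bar>y - p0\<bar> \<le> sensitivity x * \<bar>y - p0\<bar>"
        using sensitivity_mono[of t x] t by (intro mult_right_mono) auto
      also have "\<dots> < sensitivity x * e" using y sensitivity_pos[of x] by simp
      also note e_le(1)
      finally show ?thesis using abs_P_diff_le[of t y p0] t tm(2) unfolding m_def by force
    qed
    moreover have "Q y x > 0"
    proof -
      have "D * \<bar>y - p0\<bar> < D * e" using y D by simp
      also note e_le(2)
      finally show ?thesis using abs_Q_diff_le[OF x(1), of y p0] unfolding D_def by linarith
    qed
    ultimately show ?thesis using \<open>y > 0\<close> x(1) by (auto simp: overshoot_def)
  qed
  then show "\<exists>e>0. \<forall>y. dist y p0 < e \<longrightarrow> y \<in> overshoot" using e by blast
qed

text \<open>
  Near a first zero t1 of v'' after x, v'' is small, so v' and hence f(v') barely move, while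
  v grows at least at the rate v'(x); this forces v''(t) = v''(t) - v''(t1) < 0 just before t1.
\<close>

lemma Q_pos_persists:
  assumes x: "x \<ge> 0" "P p0 x > 0" "Q p0 x > 0" and "x \<le> T"
  shows "Q p0 T > 0"
proof (rule ccontr)
  assume "\<not> Q p0 T > 0"
  then obtain t1 where t1: "t1 \<in> {x<..T}" "Q p0 t1 = 0" "\<forall>t\<in>{x..<t1}. Q p0 t > 0"
    using first_zero_after[of x T "Q p0"] continuous_on_Q assms by auto
  have Q_nonneg: "Q p0 s \<ge> 0" if "s \<in> {x..t1}" for s
    using that t1 by (cases "s = t1") (auto intro: less_imp_le)
  have P_ge: "P p0 s \<ge> P p0 x" if "s \<in> {x..t1}" for s
    using deriv_ge_imp_diff_ge[of x s "P p0" "Q p0" 0] that x Q_nonneg P_has_real_derivative by auto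
  define \<epsilon> where "\<epsilon> = c * P p0 x / (2 * K)"
  have \<epsilon>: "\<epsilon> > 0" using c_pos x K_pos by (simp add: \<epsilon>_def)
  obtain \<delta> where \<delta>: "\<delta> > 0" "\<forall>s. dist s t1 < \<delta> \<longrightarrow> dist (Q p0 s) (Q p0 t1) < \<epsilon>"
    using continuous_on_Q[of UNIV, unfolded continuous_on_iff] \<epsilon> by blast
  define t where "t = max x (t1 - \<delta>/2)"
  have t: "x \<le> t" "t < t1" using t1 \<delta> by (auto simp: t_def)
  have Q_le: "Q p0 s \<le> \<epsilon>" if "s \<in> {t..t1}" for s
  proof -
    have "dist s t1 < \<delta>" using that \<delta>(1) by (auto simp: t_def dist_real_def)
    then show ?thesis using \<delta>(2) t1(2) by (force simp: dist_real_def)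
  qed
  have "P p0 x * (t1 - t) \<le> V p0 t1 - V p0 t"
    by (rule deriv_ge_imp_diff_ge[where g'="P p0"]) (use t x P_ge V_has_real_derivative in auto)
  moreover have "\<bar>P p0 t1 - P p0 t\<bar> \<le> \<epsilon> * (t1 - t)"
    using deriv_le_imp_diff_le[of t t1 "P p0" "Q p0" \<epsilon>] deriv_ge_imp_diff_ge[of t t1 "P p0" "Q p0" 0]
      t x Q_le Q_nonneg P_has_real_derivative by auto
  then have "K * \<bar>P p0 t1 - P p0 t\<bar> \<le> K * (\<epsilon> * (t1 - t))"
    using K_pos by (intro mult_left_mono) auto
  then have "f (P p0 t1) - f (P p0 t) \<le> K * (\<epsilon> * (t1 - t))"
    using f_lipschitz[of "P p0 t1" "P p0 t"] by linarith
  ultimately have "c * (P p0 x * (t1 - t)) - K * (\<epsilon> * (t1 - t))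
      \<le> c * (V p0 t1 - V p0 t) - (f (P p0 t1) - f (P p0 t))"
    using c_pos mult_left_mono[of "P p0 x * (t1 - t)" "V p0 t1 - V p0 t" c] by linarith
  moreover have "c * (P p0 x * (t1 - t)) - K * (\<epsilon> * (t1 - t)) = (t1 - t) * (c * P p0 x / 2)"
    using K_pos by (simp add: \<epsilon>_def field_simps)
  moreover have "(t1 - t) * (c * P p0 x / 2) > 0" using t c_pos x by simp
  moreover have "Q p0 t = - k * (c * (V p0 t1 - V p0 t) - (f (P p0 t1) - f (P p0 t)))"
    using t1(2) by (simp add: Q_def algebra_simps)
  ultimately have "Q p0 t < 0" using k_pos by (simp add: mult_pos_pos)
  then show False using t1(3) t by force
qed

lemma overshoot_P_pos:
  assumes "p0 \<in> overshoot" "t \<ge> 0"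
  shows "P p0 t > 0"
proof -
  obtain x where x: "x \<ge> 0" "\<forall>t\<in>{0..x}. P p0 t > 0" "Q p0 x > 0"
    using assms by (auto simp: overshoot_def)
  show ?thesis
  proof (cases "t \<le> x")
    case False
    have "0 * (t - x) \<le> P p0 t - P p0 x"
      using False x Q_pos_persists[of x p0] P_has_real_derivative
      by (intro deriv_ge_imp_diff_ge[where g'="Q p0"]) (auto intro: less_imp_le)
    then show ?thesis using x(2)[rule_format, of x] x(1) by simp
  qed (use x assms in auto)
qed

lemma undershoot_overshoot_disjoint: "undershoot \<inter> overshoot = {}"
  using overshoot_P_pos by (fastforce simp: undershoot_def)

lemma undershoot_nonempty: "undershoot \<noteq> {}"
proof -
  have "Q 0 0 < 0" using f_zero_pos k_pos by (simp add: Q_def V_zero P_zero mult_pos_pos)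
  then obtain t where t: "t > 0" "P 0 t < 0"
    using deriv_neg_imp_decrease_right[of 0 "P 0" "Q 0 0"] P_has_real_derivative[of 0 0]
    by (auto simp: P_zero)
  define p1 where "p1 = - P 0 t / (2 * sensitivity t)"
  have p1: "p1 > 0" using t sensitivity_pos[of t] by (simp add: p1_def divide_neg_pos)
  have "P p1 t \<le> P 0 t + sensitivity t * \<bar>p1 - 0\<bar>" using abs_P_diff_le[of t p1 0] t by simp
  also have "sensitivity t * \<bar>p1 - 0\<bar> = - P 0 t / 2"
    using p1 sensitivity_pos[of t] by (simp add: abs_of_pos) (simp add: p1_def)
  finally have "P p1 t < 0" using t by simp
  then have "p1 \<in> undershoot" using p1 t unfolding undershoot_def by (auto intro!: exI[of _ t])
  then show ?thesis by blast
qed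

text \<open>While v' \<ge> 0, the quantity exp(\<gamma> t) (v' - r v + M) is nondecreasing.\<close>

lemma P_minus_V_lower_bound:
  assumes r: "0 \<le> r" "\<gamma> * r \<le> k * c" "k * K + r \<le> \<gamma>" "k * f 0 \<le> \<gamma> * M"
    and t: "t \<ge> 0" "\<forall>s\<in>{0..t}. P p0 s \<ge> 0"
  shows "(p0 + M) * exp (- (\<gamma> * t)) - M \<le> P p0 t - r * V p0 t"
proof -
  define E where "E s = exp (\<gamma> * s) * (P p0 s - r * V p0 s + M)" for s
  define E' where "E' s = exp (\<gamma> * s) * (\<gamma> * (P p0 s - r * V p0 s + M) + (Q p0 s - r * P p0 s))"
    for s
  have "(E has_real_derivative E' s) (at s within {0..})" if "s \<ge> 0" for s
    unfolding E_def[abs_def] E'_def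
    by (rule derivative_eq_intros P_has_real_derivative[OF that] V_has_real_derivative[OF that]
        refl | simp add: algebra_simps)+
  moreover have "E' s \<ge> 0" if s: "s \<in> {0..t}" for s
  proof -
    have "0 \<le> (\<gamma> - k * K - r) * P p0 s + (k * c - \<gamma> * r) * V p0 s + (\<gamma> * M - k * f 0)"
      using r t s V_nonneg[of s p0] by (intro add_nonneg_nonneg mult_nonneg_nonneg) auto
    also have "\<dots> \<le> \<dots> + k * (f 0 + K * P p0 s - f (P p0 s))"
      using f_le_affine[of "P p0 s"] t s k_pos by simp
    also have "\<dots> = \<gamma> * (P p0 s - r * V p0 s + M) + (Q p0 s - r * P p0 s)"
      by (simp add: Q_def algebra_simps)
    finally show ?thesis by (simp add: E'_def)
  qed
  ultimately have "0 * (t - 0) \<le> E t - E 0"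
    using t by (intro deriv_ge_imp_diff_ge[where g'=E']) auto
  then have "exp (- (\<gamma> * t)) * (p0 + M) \<le> exp (- (\<gamma> * t)) * E t"
    by (simp add: E_def P_zero V_zero)
  also have "exp (- (\<gamma> * t)) * E t = P p0 t - r * V p0 t + M"
    by (simp add: E_def exp_minus field_simps)
  finally show ?thesis by (simp add: algebra_simps)
qed

text \<open>
  Until T0 the bound keeps v' - r v above M, so v' cannot vanish before T0; a zero t1 > T0 is
  excluded since then r v(t1) \<ge> r M T0 \<ge> (1 + r) M, while v' - r v > - M throughout.
\<close>

lemma P_nonneg_of_large_initial:
  assumes r: "0 < r" "\<gamma> * r \<le> k * c" "k * K + r \<le> \<gamma>" "k * f 0 \<le> \<gamma> * M"
    and "M > 0" "1 + r \<le> r * T0" "M < p0"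
    and p0: "2 * M \<le> (p0 + M) * exp (- (\<gamma> * T0))" and "t2 \<ge> 0"
  shows "P p0 t2 \<ge> 0"
proof (rule ccontr)
  have "\<gamma> > 0" using r(1,3) mult_pos_pos[OF k_pos K_pos] by linarith
  have "T0 > 0" using r(1) \<open>1 + r \<le> r * T0\<close> by (smt (verit) zero_less_mult_pos)
  have "p0 + M > 0" using \<open>M > 0\<close> \<open>M < p0\<close> by simp
  assume "\<not> P p0 t2 \<ge> 0"
  then obtain t1 where t1: "t1 \<in> {0<..t2}" "P p0 t1 = 0" "\<forall>t\<in>{0..<t1}. P p0 t > 0"
    using first_zero_after[of 0 t2 "P p0"] continuous_on_P \<open>t2 \<ge> 0\<close> \<open>M < p0\<close> \<open>M > 0\<close>
    by (auto simp: P_zero)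
  have P_nonneg: "\<forall>s\<in>{0..u}. P p0 s \<ge> 0" if "u \<le> t1" for u
    using t1 that by (metis atLeastAtMost_iff atLeastLessThan_iff less_eq_real_def order_trans)
  have rV_nonneg: "r * V p0 s \<ge> 0" if "s \<in> {0..t1}" for s
    using that r(1) V_nonneg[of s p0] P_nonneg[of s] by simp
  have bound: "(p0 + M) * exp (- (\<gamma> * s)) - M \<le> P p0 s - r * V p0 s" if "s \<in> {0..t1}" for s
    using that P_nonneg[of s] by (intro P_minus_V_lower_bound[OF less_imp_le[OF r(1)] r(2-4)]) auto
  have P_ge: "M + r * V p0 s \<le> P p0 s" if "s \<in> {0..T0}" "s \<le> t1" for s
  proof -
    have "exp (- (\<gamma> * T0)) \<le> exp (- (\<gamma> * s))" using that \<open>\<gamma> > 0\<close> by simp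
    then have "2 * M \<le> (p0 + M) * exp (- (\<gamma> * s))"
      using p0 \<open>p0 + M > 0\<close> by (smt (verit) mult_left_mono)
    then show ?thesis using that bound[of s] by simp
  qed
  show False
  proof (cases "t1 \<le> T0")
    case True
    then show False using P_ge[of t1] t1 rV_nonneg[of t1] \<open>M > 0\<close> by simp
  next
    case False
    have "M * (T0 - 0) \<le> V p0 T0 - V p0 0"
    proof (rule deriv_ge_imp_diff_ge[where g'="P p0"])
      fix s assume "s \<in> {0..T0}"
      then show "M \<le> P p0 s" using P_ge[of s] rV_nonneg[of s] False by simp
    qed (use \<open>T0 > 0\<close> V_has_real_derivative in auto)
    moreover have "0 * (t1 - T0) \<le> V p0 t1 - V p0 T0"
      using False \<open>T0 > 0\<close> P_nonneg[of t1] V_has_real_derivative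
      by (intro deriv_ge_imp_diff_ge[where g'="P p0"]) auto
    ultimately have "M * T0 \<le> V p0 t1" by (simp add: V_zero)
    then have "r * (M * T0) \<le> r * V p0 t1" using r(1) by simp
    moreover have "M * (1 + r) \<le> M * (r * T0)"
      using \<open>1 + r \<le> r * T0\<close> \<open>M > 0\<close> by simp
    then have "M + M * r \<le> r * (M * T0)" by (simp add: algebra_simps)
    moreover have "0 < (p0 + M) * exp (- (\<gamma> * t1))" using \<open>p0 + M > 0\<close> by simp
    moreover have "0 < M * r" using r(1) \<open>M > 0\<close> by simp
    ultimately show False using bound[of t1] t1 by simp
  qed
qed

lemma large_slope_P_nonneg: "\<exists>p0>0. \<forall>t\<ge>0. P p0 t \<ge> 0"
proof -
  define r where "r = min 1 (c / (K + sigma^2 / 2))"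
  define \<gamma> where "\<gamma> = k * K + r"
  define M where "M = k * f 0 / \<gamma>"
  define T0 where "T0 = 1 / r + 1"
  define p0 where "p0 = 2 * M * exp (\<gamma> * T0) - M"
  have sK: "K + sigma^2 / 2 > 0" using K_pos by (simp add: add_pos_nonneg)
  have r: "r > 0" "r \<le> 1" using c_pos sK by (auto simp: r_def)
  have "\<gamma> > 0" using mult_pos_pos[OF k_pos K_pos] r by (simp add: \<gamma>_def)
  then have "M > 0" using k_pos f_zero_pos by (simp add: M_def)
  have "T0 > 0" using r by (simp add: T0_def add_pos_pos)
  then have "exp (\<gamma> * T0) > 1" using mult_pos_pos[OF \<open>\<gamma> > 0\<close>] by simp
  then have "M * 1 < M * exp (\<gamma> * T0)" using \<open>M > 0\<close> by (intro mult_strict_left_mono)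
  moreover have "p0 = 2 * (M * exp (\<gamma> * T0)) - M" by (simp add: p0_def)
  ultimately have "M < p0" by linarith
  then have "p0 > 0" using \<open>M > 0\<close> by simp
  have "r * (K + sigma^2 / 2) \<le> c" using sK by (simp add: r_def min_def pos_le_divide_eq)
  then have "k * (r * (K + sigma^2 / 2)) \<le> k * c" using k_pos by (simp add: mult_left_mono)
  moreover have "k * (sigma^2 / 2) = 1" using sigma_pos by (simp add: k_def)
  moreover have "r * r \<le> r" using r by (simp add: mult_left_le_one_le)
  ultimately have "\<gamma> * r \<le> k * c" by (simp add: \<gamma>_def algebra_simps)
  moreover have "(p0 + M) * exp (- (\<gamma> * T0)) = 2 * M"
    by (simp add: p0_def exp_minus field_simps)
  moreover have "1 + r \<le> r * T0" using r by (simp add: T0_def field_simps)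
  ultimately show ?thesis
    using P_nonneg_of_large_initial[OF r(1) _ _ _ \<open>M > 0\<close> _ \<open>M < p0\<close>, of \<gamma>] \<open>\<gamma> > 0\<close> \<open>p0 > 0\<close>
    by (auto simp: \<gamma>_def M_def)
qed

lemma exists_critical_slope: "\<exists>p0>0. p0 \<notin> undershoot \<and> p0 \<notin> overshoot"
proof (rule ccontr)
  assume "\<not> ?thesis"
  then have cover: "{0<..} \<subseteq> undershoot \<union> overshoot" by auto
  have "undershoot \<inter> overshoot \<inter> {0<..} = {}" using undershoot_overshoot_disjoint by auto
  then have "undershoot \<inter> {0<..} = {} \<or> overshoot \<inter> {0<..} = {}"
    using connectedD[OF connected_Ioi open_undershoot open_overshoot _ cover] by blast
  moreover have "undershoot \<inter> {0<..} \<noteq> {}"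
    using undershoot_nonempty by (auto simp: undershoot_def)
  moreover obtain p0 where "p0 > 0" "\<forall>t\<ge>0. P p0 t \<ge> 0" using large_slope_P_nonneg by blast
  then have "p0 \<in> overshoot \<inter> {0<..}" using cover by (force simp: undershoot_def)
  ultimately show False by blast
qed

text \<open>
  (f(0)/c, 0) is an equilibrium of the planar system, so a trajectory with v'' \<le> 0 cannot reach
  it in finite time: on a short interval before t1, v'' is bounded below by a small multiple of
  v', which keeps v' away from 0.
\<close>

lemma equilibrium_not_reached:
  assumes t1: "0 < t1" "P p0 t1 = 0" "Q p0 t1 = 0"
    and P_pos: "\<forall>s\<in>{0..<t1}. P p0 s > 0" and Q_nonpos: "\<forall>s\<in>{0..t1}. Q p0 s \<le> 0"
  shows False
proof -
  have cV: "c * V p0 t1 = f 0" using t1 k_pos by (simp add: Q_def)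
  define B where "B = k * (K + c)"
  have "B > 0" using k_pos K_pos c_pos by (simp add: B_def)
  define \<tau> where "\<tau> = max 0 (t1 - min 1 (1 / (2 * B)))"
  have \<tau>: "0 \<le> \<tau>" "\<tau> < t1" "t1 - \<tau> \<le> 1" "t1 - \<tau> \<le> 1 / (2 * B)"
    using t1 \<open>B > 0\<close> by (auto simp: \<tau>_def)
  have "P p0 \<tau> > 0" using P_pos \<tau> by auto
  have P_le: "0 \<le> P p0 s \<and> P p0 s \<le> P p0 \<tau>" if s: "s \<in> {\<tau>..t1}" for s
  proof -
    have "P p0 s - P p0 \<tau> \<le> 0 * (s - \<tau>)"
      by (rule deriv_le_imp_diff_le[where g'="Q p0"]) (use s \<tau> Q_nonpos P_has_real_derivative in auto)
    moreover have "0 \<le> P p0 s" using s \<tau>(1) P_pos t1(2) by (cases "s = t1") (auto intro: less_imp_le)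
    ultimately show ?thesis by simp
  qed
  have Q_ge: "- (B * P p0 \<tau>) \<le> Q p0 s" if s: "s \<in> {\<tau>..t1}" for s
  proof -
    have "V p0 t1 - V p0 s \<le> P p0 \<tau> * (t1 - s)"
      by (rule deriv_le_imp_diff_le[where g'="P p0"]) (use s \<tau> P_le V_has_real_derivative in auto)
    also have "\<dots> \<le> P p0 \<tau>" using s \<tau> \<open>P p0 \<tau> > 0\<close> by (simp add: mult_left_le)
    finally have "c * (V p0 t1 - V p0 s) \<le> c * P p0 \<tau>" using c_pos by simp
    moreover have "f (P p0 s) - f 0 \<le> K * P p0 \<tau>"
      using f_lipschitz[of "P p0 s" 0] P_le[OF s] K_pos by (smt (verit) mult_left_mono)
    moreover have "- Q p0 s = k * ((f (P p0 s) - f 0) + c * (V p0 t1 - V p0 s))"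
      using cV by (simp add: Q_def algebra_simps)
    ultimately have "- Q p0 s \<le> k * (K * P p0 \<tau> + c * P p0 \<tau>)"
      using k_pos by (simp add: mult_left_mono)
    then show ?thesis by (simp add: B_def algebra_simps)
  qed
  have "- (B * P p0 \<tau>) * (t1 - \<tau>) \<le> P p0 t1 - P p0 \<tau>"
    by (rule deriv_ge_imp_diff_ge[where g'="Q p0"]) (use \<tau> Q_ge P_has_real_derivative in auto)
  moreover have "B * (t1 - \<tau>) \<le> 1 / 2"
    using mult_left_mono[OF \<tau>(4), of B] \<open>B > 0\<close> by simp
  then have "B * P p0 \<tau> * (t1 - \<tau>) \<le> P p0 \<tau> / 2"
    using \<open>P p0 \<tau> > 0\<close> mult_right_mono[of "B * (t1 - \<tau>)" "1/2" "P p0 \<tau>"] by (simp add: algebra_simps)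
  ultimately show False using t1(2) \<open>P p0 \<tau> > 0\<close> by (simp only: mult_minus_left)
qed

context
  fixes p0 assumes critical: "p0 > 0" "p0 \<notin> undershoot" "p0 \<notin> overshoot"
begin

lemma critical_P_nonneg: "t \<ge> 0 \<Longrightarrow> P p0 t \<ge> 0"
  using critical(1,2) unfolding undershoot_def by force

lemma critical_Q_nonpos_while_P_pos: "x \<ge> 0 \<Longrightarrow> \<forall>t\<in>{0..x}. P p0 t > 0 \<Longrightarrow> Q p0 x \<le> 0"
  using critical(1,3) unfolding overshoot_def by force

lemma critical_P_pos:
  assumes "t2 \<ge> 0" shows "P p0 t2 > 0"
proof (rule ccontr)
  assume "\<not> P p0 t2 > 0"
  then obtain t1 where t1: "t1 \<in> {0<..t2}" "P p0 t1 = 0" "\<forall>t\<in>{0..<t1}. P p0 t > 0"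
    using first_zero_after[of 0 t2 "P p0"] continuous_on_P critical(1) assms by (auto simp: P_zero)
  have Q_nonpos_before: "Q p0 s \<le> 0" if "s \<in> {0..<t1}" for s
    using that t1(3) by (intro critical_Q_nonpos_while_P_pos) auto
  then have "Q p0 t1 \<le> 0"
    using continuous_le_on_closure[of "{0..<t1}" "Q p0" t1 0] continuous_on_Q t1(1) by simp
  then have Q_nonpos: "\<forall>s\<in>{0..t1}. Q p0 s \<le> 0"
    using Q_nonpos_before by (metis atLeastAtMost_iff atLeastLessThan_iff order_less_le)
  show False
  proof (cases "Q p0 t1 = 0")
    case True
    then show False using equilibrium_not_reached[OF _ t1(2) True t1(3) Q_nonpos] t1(1) by simp
  next
    case False
    then obtain t where "t > t1" "P p0 t < P p0 t1"
      using deriv_neg_imp_decrease_right[of t1 "P p0" "Q p0 t1"] P_has_real_derivative[of t1 p0]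
        \<open>Q p0 t1 \<le> 0\<close> t1(1) by auto
    then show False using critical_P_nonneg[of t] t1 by auto
  qed
qed

lemma critical_Q_nonpos: "t \<ge> 0 \<Longrightarrow> Q p0 t \<le> 0"
  by (rule critical_Q_nonpos_while_P_pos) (auto intro: critical_P_pos)

lemma critical_P_antimono: "0 \<le> s \<Longrightarrow> s \<le> t \<Longrightarrow> P p0 t \<le> P p0 s"
  using deriv_le_imp_diff_le[of s t "P p0" "Q p0" 0] critical_Q_nonpos P_has_real_derivative by auto

lemma critical_V_mono: "0 \<le> s \<Longrightarrow> s \<le> t \<Longrightarrow> V p0 s \<le> V p0 t"
  using deriv_ge_imp_diff_ge[of s t "V p0" "P p0" 0] critical_P_nonneg V_has_real_derivative by auto

lemma critical_V_le: "t \<ge> 0 \<Longrightarrow> V p0 t \<le> (f 0 + K * p0) / c"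
proof -
  assume t: "t \<ge> 0"
  have "c * V p0 t \<le> f (P p0 t)" using critical_Q_nonpos[OF t] k_pos by (simp add: Q_def mult_le_0_iff)
  also have "\<dots> \<le> f 0 + K * P p0 t" using f_le_affine critical_P_nonneg t by auto
  also have "\<dots> \<le> f 0 + K * p0" using critical_P_antimono[of 0 t] t K_pos by (simp add: P_zero)
  finally show ?thesis using c_pos by (simp add: pos_le_divide_eq mult.commute)
qed

lemma critical_V_nonneg: "t \<ge> 0 \<Longrightarrow> V p0 t \<ge> 0"
  using critical_V_mono[of 0 t] by (simp add: V_zero)

lemma critical_P_tendsto_0: "(P p0 \<longlongrightarrow> 0) at_top"
proof (rule order_tendstoI)
  fix y :: real assume "y < 0"
  then show "eventually (\<lambda>t. y < P p0 t) at_top"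
    unfolding eventually_at_top_linorder using critical_P_nonneg
    by (intro exI[of _ 0]) (auto intro: less_le_trans)
next
  fix y :: real assume y: "0 < y"
  have "\<exists>t0\<ge>0. P p0 t0 < y"
  proof (rule ccontr)
    assume "\<not> ?thesis"
    then have "\<And>t. t \<ge> 0 \<Longrightarrow> P p0 t \<ge> y" by force
    moreover define T where "T = ((f 0 + K * p0) / c + 1) / y"
    moreover have "T \<ge> 0" using y critical_V_le[of 0] by (simp add: T_def V_zero)
    ultimately have "y * (T - 0) \<le> V p0 T - V p0 0"
      using V_has_real_derivative by (intro deriv_ge_imp_diff_ge[where g'="P p0"]) auto
    then show False using y critical_V_le[OF \<open>T \<ge> 0\<close>] by (simp add: V_zero T_def)
  qed
  then obtain t0 where "t0 \<ge> 0" "P p0 t0 < y" by blast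
  then show "eventually (\<lambda>t. P p0 t < y) at_top"
    unfolding eventually_at_top_linorder using critical_P_antimono
    by (intro exI[of _ t0]) (auto intro: le_less_trans)
qed

lemma critical_V_convergent: "\<exists>l. (V p0 \<longlongrightarrow> l) at_top"
proof
  have bdd: "bdd_above (V p0 ` {0..})" using critical_V_le by (auto intro!: bdd_aboveI[of _ "(f 0 + K * p0) / c"])
  show "(V p0 \<longlongrightarrow> Sup (V p0 ` {0..})) at_top"
  proof (rule order_tendstoI)
    fix y assume "y < Sup (V p0 ` {0..})"
    then obtain t0 where "t0 \<ge> 0" "y < V p0 t0" using less_cSup_iff[OF _ bdd] by auto
    then show "eventually (\<lambda>t. y < V p0 t) at_top"
      unfolding eventually_at_top_linorder using critical_V_mono
      by (intro exI[of _ t0]) (auto intro: less_le_trans)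
  next
    fix y assume "Sup (V p0 ` {0..}) < y"
    then show "eventually (\<lambda>t. V p0 t < y) at_top"
      unfolding eventually_at_top_linorder using cSup_upper[OF _ bdd]
      by (intro exI[of _ 0]) (auto intro: le_less_trans)
  qed
qed

text \<open>If v'' tended to a negative limit, v' would eventually become negative.\<close>

lemma critical_V_tendsto: "(V p0 \<longlongrightarrow> f 0 / c) at_top"
proof -
  obtain l where l: "(V p0 \<longlongrightarrow> l) at_top" using critical_V_convergent by blast
  define q where "q = k * (c * l - f 0)"
  have "isCont f 0" using continuous_on_f[of UNIV] by (simp add: continuous_on_eq_continuous_at)
  then have Q_lim: "(Q p0 \<longlongrightarrow> q) at_top"
    unfolding Q_def[abs_def] q_def
    by (intro tendsto_intros l isCont_tendsto_compose[OF _ critical_P_tendsto_0])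
  have "q \<le> 0"
    by (rule tendsto_upperbound[OF Q_lim])
      (auto simp: eventually_at_top_linorder intro!: exI[of _ 0] critical_Q_nonpos)
  moreover have "\<not> q < 0"
  proof
    assume q: "q < 0"
    then obtain T0 where T0: "\<And>t. t \<ge> T0 \<Longrightarrow> Q p0 t < q / 2"
      using order_tendstoD(2)[OF Q_lim, of "q / 2"] unfolding eventually_at_top_linorder by auto
    define T where "T = max 0 T0"
    define s where "s = 2 * (P p0 T + 1) / (- q)"
    have "s \<ge> 0"
      unfolding s_def using q critical_P_nonneg[of T] by (intro divide_nonneg_pos) (auto simp: T_def)
    have "P p0 (T + s) - P p0 T \<le> (q / 2) * (T + s - T)"
      using T0 \<open>s \<ge> 0\<close> P_has_real_derivative
      by (intro deriv_le_imp_diff_le[where g'="Q p0"]) (auto simp: T_def less_imp_le)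
    also have "\<dots> = - (P p0 T + 1)" using q by (simp add: s_def field_simps)
    finally show False using critical_P_nonneg[of "T + s"] \<open>s \<ge> 0\<close> by (simp add: T_def)
  qed
  ultimately have "q = 0" by simp
  then have "l = f 0 / c" using k_pos c_pos by (simp add: q_def field_simps)
  then show ?thesis using l by simp
qed

end

end

theorem proposition3p2:
  fixes mu sigma c a lam :: real
  assumes "sigma > 0" and "c > 0" and "a > 0" and "lam > 0"
    and "a > max 1 (2 * mu)"
    and "mu > max c (sigma^2 / 2)"
  shows "\<exists>v v' v'' :: real \<Rightarrow> real.
    (\<forall>x\<ge>0. (v has_real_derivative v' x) (at x within {0..})) \<and>
    (\<forall>x\<ge>0. (v' has_real_derivative v'' x) (at x within {0..})) \<and>
    continuous_on {0..} v'' \<and>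
    bounded (v ` {0..}) \<and>
    (\<forall>x\<ge>0. sigma^2 / 2 * v'' x + fA mu lam a (v' x) - c * v x = 0) \<and>
    v 0 = 0 \<and>
    (v \<longlongrightarrow> fA mu lam a 0 / c) at_top \<and>
    v' 0 > 0 \<and>
    (v' \<longlongrightarrow> 0) at_top \<and>
    mono_on {0..} v \<and>
    concave_on {0..} v"
proof -
  interpret value_ode mu sigma c a lam
    using assms by unfold_locales auto
  obtain p0 where crit: "p0 > 0" "p0 \<notin> undershoot" "p0 \<notin> overshoot"
    using exists_critical_slope by blast
  have "bounded (V p0 ` {0..})"
    unfolding bounded_iff using critical_V_nonneg[OF crit] critical_V_le[OF crit]
    by (intro exI[of _ "(f 0 + K * p0) / c"]) auto
  moreover have "mono_on {0..} (V p0)"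
    using critical_V_mono[OF crit] by (auto intro: mono_onI)
  moreover have "concave_on {0..} (V p0)"
    using V_has_real_derivative critical_P_antimono[OF crit] by (rule concave_on_of_deriv_antimono)
  ultimately show ?thesis
    using V_has_real_derivative P_has_real_derivative continuous_on_Q ode_equation V_zero P_zero crit(1)
      critical_V_tendsto[OF crit] critical_P_tendsto_0[OF crit]
    by (intro exI[of _ "V p0"] exI[of _ "P p0"] exI[of _ "Q p0"]) (auto simp: f_def)
qed

end
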